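(* Let $\nu>0$ and let $F$ be a distribution function on $\mathbb R$ with $F\in\mathrm{AGG}(\nu)$. For each $p\in\mathbb N$, let $\epsilon_p(1),\ldots,\epsilon_p(p)$ be random variables, each with marginal distribution $F$, with arbitrary dependence among them. Let $M_p=\max_{j=1,\ldots,p}\epsilon_p(j)$, let $u_q=F^{\leftarrow}(1-1/q)$, let $c_p=u_{p\log p}/u_p-1$, and set $$\xi_p:=\frac{M_p}{(1+c_p)u_p}.$$ Then there exist $p_0,t_0>0$ and an absolute constant $C>0$ such that $$\mathbb P[\xi_p>t]\le \exp\{-Ct^\nu\}\quad\text{for all } p>p_0,\ t>t_0.$$ In particular, the family $\{(\xi_p)_+ : p\in\mathbb N\}$ is uniformly integrable.
   Context: $F^{\leftarrow}(u)=\inf\{x: F(x)\ge u\}$ denotes the generalized inverse, and $\overline F=1-F$. A distribution $F$ has asymptotically generalized Gaussian tails of index $\nu>0$, written $F\in\mathrm{AGG}(\nu)$, if $\log \overline F(x) = -\frac{1}{\nu}x^\nu(1+o(1))$ as $x\to\infty$ (equivalently, for every $\epsilon>0$ there is $C(\epsilon)$ with $-\frac1\nu x^\nu(1+\epsilon)\le \log\overline F(x)\le -\frac1\nu x^\nu(1-\epsilon)$ for all $x\ge C(\epsilon)$). $(a)_+=\max\{a,0\}$. *)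

theory Defs
  imports "HOL-Probability.Probability"
begin

definition distribution_function :: "(real \<Rightarrow> real) \<Rightarrow> bool" where
  "distribution_function F \<longleftrightarrow>
     mono F \<and> (\<forall>x. continuous (at_right x) F) \<and>
     (F \<longlongrightarrow> 0) at_bot \<and> (F \<longlongrightarrow> 1) at_top"

definition gen_inv :: "(real \<Rightarrow> real) \<Rightarrow> real \<Rightarrow> real" where
  "gen_inv F u = Inf {x. u \<le> F x}"

definition AGG :: "real \<Rightarrow> (real \<Rightarrow> real) \<Rightarrow> bool" where
  "AGG \<nu> F \<longleftrightarrow>
     (\<forall>\<epsilon>>0. \<exists>C>0. \<forall>x\<ge>C.
        - (1/\<nu>) * x powr \<nu> * (1 + \<epsilon>) \<le> ln (1 - F x) \<and>
        ln (1 - F x) \<le> - (1/\<nu>) * x powr \<nu> * (1 - \<epsilon>))"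

definition unif_integrable :: "('i \<Rightarrow> 'a measure) \<Rightarrow> ('i \<Rightarrow> 'a \<Rightarrow> real) \<Rightarrow> 'i set \<Rightarrow> bool" where
  "unif_integrable M X I \<longleftrightarrow>
     (\<forall>i\<in>I. integrable (M i) (X i)) \<and>
     (\<forall>e>0. \<exists>K. \<forall>i\<in>I.
        (\<integral>\<omega>. indicator {\<omega>\<in>space (M i). K < \<bar>X i \<omega>\<bar>} \<omega> * \<bar>X i \<omega>\<bar> \<partial>M i) \<le> e)"

end

theory Submission
  imports Defs "HOL-Real_Asymp.Real_Asymp"
begin

text \<open>Write u(q) for F^{<-}(1 - 1/q); then (1 + c_p) u(p) = u(p log p), so xi_p = M_p / u(p log p).
  The lower AGG bound forces u(q)^nu >= (3/4) nu log q for large q. A union bound over the p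
  coordinates, which needs no independence, and the upper AGG bound give
  P[xi_p > t] <= p (1 - F(t u(p log p))) <= p exp(-(t^nu/2) log p), and this is at most
  exp(-t^nu/4) as soon as t^nu >= 4 and log p >= 1. Summing the tail over integer levels then
  bounds E[xi_p; xi_p > K] by the tail of a convergent series, uniformly in p.\<close>

lemma distribution_function_le_1:
  assumes "distribution_function F"
  shows "F x \<le> 1"
proof -
  have mono: "mono F" and lim: "(F \<longlongrightarrow> 1) at_top"
    using assms unfolding distribution_function_def by auto
  have "eventually (\<lambda>y. F x \<le> F y) at_top"
    using eventually_ge_at_top[of x] by eventually_elim (use mono in \<open>auto simp: mono_def\<close>)
  from tendsto_lowerbound[OF lim this] show ?thesis by simp
qed

lemma AGG_less_1:
  assumes "distribution_function F" "\<nu> > 0" "AGG \<nu> F"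
  shows "F x < 1"
proof -
  obtain C where "C > 0" and C: "\<And>x. x \<ge> C \<Longrightarrow> ln (1 - F x) \<le> - (1/\<nu>) * x powr \<nu> * (1 - 1/2)"
    using assms(3) unfolding AGG_def by (metis half_gt_zero zero_less_one)
  define y where "y = max x C"
  have "0 < (1/\<nu>) * y powr \<nu> * (1 - 1/2)"
    using \<open>C > 0\<close> assms(2) by (simp add: y_def)
  with C[of y] have "1 - F y \<noteq> 0"
    by (auto simp: y_def)
  with distribution_function_le_1[OF assms(1), of y] have "F y < 1" by simp
  moreover have "F x \<le> F y"
    using assms(1) unfolding distribution_function_def mono_def y_def by auto
  ultimately show ?thesis by simp
qed

lemma AGG_exp_bounds:
  assumes "distribution_function F" "\<nu> > 0" "AGG \<nu> F" "\<epsilon> > 0"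
  obtains C where "C > 0"
    "\<And>x. x \<ge> C \<Longrightarrow> exp (- (1/\<nu>) * x powr \<nu> * (1 + \<epsilon>)) \<le> 1 - F x"
    "\<And>x. x \<ge> C \<Longrightarrow> 1 - F x \<le> exp (- (1/\<nu>) * x powr \<nu> * (1 - \<epsilon>))"
proof -
  obtain C where "C > 0" and C: "\<And>x. x \<ge> C \<Longrightarrow>
      - (1/\<nu>) * x powr \<nu> * (1 + \<epsilon>) \<le> ln (1 - F x) \<and> ln (1 - F x) \<le> - (1/\<nu>) * x powr \<nu> * (1 - \<epsilon>)"
    using assms(3,4) unfolding AGG_def by blast
  show ?thesis
  proof (rule that[OF \<open>C > 0\<close>])
    fix x assume "x \<ge> C"
    have exp_ln: "exp (ln (1 - F x)) = 1 - F x"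
      using AGG_less_1[OF assms(1-3), of x] by simp
    from C[OF \<open>x \<ge> C\<close>]
    have "exp (- (1/\<nu>) * x powr \<nu> * (1 + \<epsilon>)) \<le> exp (ln (1 - F x))"
      and "exp (ln (1 - F x)) \<le> exp (- (1/\<nu>) * x powr \<nu> * (1 - \<epsilon>))"
      by simp_all
    then show "exp (- (1/\<nu>) * x powr \<nu> * (1 + \<epsilon>)) \<le> 1 - F x"
      and "1 - F x \<le> exp (- (1/\<nu>) * x powr \<nu> * (1 - \<epsilon>))"
      unfolding exp_ln .
  qed
qed

lemma gen_inv_ge:
  assumes "u \<le> F y" and "\<And>x. x < L \<Longrightarrow> F x < u"
  shows "L \<le> gen_inv F u"
  unfolding gen_inv_def
proof (rule cInf_greatest)
  show "{x. u \<le> F x} \<noteq> {}" using assms(1) by blast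
  show "L \<le> x" if "x \<in> {x. u \<le> F x}" for x
    using that assms(2)[of x] by (cases "x < L") auto
qed

lemma gen_inv_ge_of_exp_lower_tail:
  assumes df: "distribution_function F" and "\<nu> > 0" "\<epsilon> > 0" "C > 0"
    and lower: "\<And>x. x \<ge> C \<Longrightarrow> exp (- (1/\<nu>) * x powr \<nu> * (1 + \<epsilon>)) \<le> 1 - F x"
    and "q > 1" and F_C: "F C < 1 - 1/q"
  shows "C \<le> gen_inv F (1 - 1/q)" and "\<nu> * ln q / (1 + \<epsilon>) \<le> gen_inv F (1 - 1/q) powr \<nu>"
proof -
  define L where "L = (\<nu> * ln q / (1 + \<epsilon>)) powr (1/\<nu>)"
  have L_powr: "L powr \<nu> = \<nu> * ln q / (1 + \<epsilon>)"
    unfolding L_def using assms by (simp add: powr_powr)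
  have mono: "mono F" and lim: "(F \<longlongrightarrow> 1) at_top"
    using df unfolding distribution_function_def by auto
  have "eventually (\<lambda>y. 1 - 1/q < F y) at_top"
    using order_tendstoD(1)[OF lim] \<open>q > 1\<close> by simp
  then obtain y where "1 - 1/q \<le> F y"
    by (auto simp: eventually_at_top_linorder intro: less_imp_le)
  moreover have "F x < 1 - 1/q" if "x < max C L" for x
  proof (cases "x < C")
    case True
    then show ?thesis using mono F_C unfolding mono_def by (meson le_less_trans less_imp_le)
  next
    case False
    then have "x \<ge> C" "x > 0" "x < L" using that \<open>C > 0\<close> by auto
    then have "x powr \<nu> < L powr \<nu>"
      using \<open>\<nu> > 0\<close> by (intro powr_less_mono2) auto
    then have "(1/\<nu>) * x powr \<nu> * (1 + \<epsilon>) < (1/\<nu>) * L powr \<nu> * (1 + \<epsilon>)"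
      using assms(2,3) by (intro mult_strict_right_mono mult_strict_left_mono) auto
    then have "exp (- (1/\<nu>) * L powr \<nu> * (1 + \<epsilon>)) < exp (- (1/\<nu>) * x powr \<nu> * (1 + \<epsilon>))"
      by simp
    also have "exp (- (1/\<nu>) * L powr \<nu> * (1 + \<epsilon>)) = 1/q"
      using assms(2,3,6) by (simp add: L_powr exp_minus inverse_eq_divide)
    finally show ?thesis using lower[OF \<open>x \<ge> C\<close>] by simp
  qed
  ultimately have "max C L \<le> gen_inv F (1 - 1/q)"
    by (rule gen_inv_ge)
  then have "C \<le> gen_inv F (1 - 1/q)" and "L powr \<nu> \<le> gen_inv F (1 - 1/q) powr \<nu>"
    using \<open>\<nu> > 0\<close> by (auto intro: powr_mono2 simp: L_def)
  then show "C \<le> gen_inv F (1 - 1/q)" and "\<nu> * ln q / (1 + \<epsilon>) \<le> gen_inv F (1 - 1/q) powr \<nu>"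
    by (simp_all add: L_powr)
qed

lemma mult_exp_neg_ln_le:
  fixes p s :: real
  assumes "p > 0" "1 \<le> ln p" "4 \<le> s"
  shows "p * exp (- s * ln p / 2) \<le> exp (- s / 4)"
proof -
  have "p * exp (- s * ln p / 2) = exp (ln p + (- s * ln p / 2))"
    using assms(1) by (simp only: exp_add exp_ln)
  also have "\<dots> = exp (ln p * (1 - s / 2))"
    by (simp add: algebra_simps)
  also have "\<dots> \<le> exp (1 * (1 - s / 2))"
    using assms(2,3) by (subst exp_le_cancel_iff, intro mult_right_mono_neg) auto
  also have "\<dots> \<le> exp (- s / 4)"
    using assms(3) by simp
  finally show ?thesis .
qed

lemma tail_at_scaled_quantile_le:
  fixes F :: "real \<Rightarrow> real"
  assumes "\<nu> > 0" and upper: "\<And>x. x \<ge> C \<Longrightarrow> 1 - F x \<le> exp (- (1/\<nu>) * x powr \<nu> * (1 - 1/3))"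
    and "0 < C" "C \<le> u" and u_powr: "3/4 * \<nu> * ln p \<le> u powr \<nu>"
    and "p > 0" "1 \<le> ln p" and "1 \<le> t" "4 \<le> t powr \<nu>"
  shows "p * (1 - F (t * u)) \<le> exp (- (1/4) * t powr \<nu>)"
proof -
  have "C \<le> t * u"
    using assms(3,4,8) mult_right_mono[of 1 t u] by linarith
  have "t powr \<nu> * ln p / 2 \<le> (1/\<nu>) * (t * u) powr \<nu> * (1 - 1/3)"
    using mult_left_mono[OF u_powr, of "t powr \<nu>"] assms(1,3,4,8)
    by (simp add: powr_mult field_simps)
  then have "exp (- (1/\<nu>) * (t * u) powr \<nu> * (1 - 1/3)) \<le> exp (- (t powr \<nu>) * ln p / 2)"
    by (subst exp_le_cancel_iff) linarith
  with upper[OF \<open>C \<le> t * u\<close>] have "1 - F (t * u) \<le> exp (- (t powr \<nu>) * ln p / 2)"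
    by (rule order_trans)
  then have "p * (1 - F (t * u)) \<le> p * exp (- (t powr \<nu>) * ln p / 2)"
    using \<open>p > 0\<close> by simp
  also have "\<dots> \<le> exp (- (1/4) * t powr \<nu>)"
    using mult_exp_neg_ln_le[OF \<open>p > 0\<close> \<open>1 \<le> ln p\<close> \<open>4 \<le> t powr \<nu>\<close>] by simp
  finally show ?thesis .
qed

lemma AGG_quantile_lower:
  assumes df: "distribution_function F" and "\<nu> > 0" and agg: "AGG \<nu> F"
  obtains C p0 :: real where "C > 0" "p0 \<ge> 3"
    and "\<And>x. x \<ge> C \<Longrightarrow> 1 - F x \<le> exp (- (1/\<nu>) * x powr \<nu> * (1 - 1/3))"
    and "\<And>p q. p > p0 \<Longrightarrow> p \<le> q \<Longrightarrow>
      C \<le> gen_inv F (1 - 1/q) \<and> 3/4 * \<nu> * ln q \<le> gen_inv F (1 - 1/q) powr \<nu>"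
proof -
  \<comment> \<open>With \<open>\<epsilon> = 1/3\<close> the two AGG exponents differ by the factor (1 - 1/3)/(1 + 1/3) = 1/2,
    which is where p exp(-(t^nu/2) log p) comes from.\<close>
  obtain C where "C > 0"
    and lower: "\<And>x. x \<ge> C \<Longrightarrow> exp (- (1/\<nu>) * x powr \<nu> * (1 + 1/3)) \<le> 1 - F x"
    and upper: "\<And>x. x \<ge> C \<Longrightarrow> 1 - F x \<le> exp (- (1/\<nu>) * x powr \<nu> * (1 - 1/3))"
    using AGG_exp_bounds[OF df \<open>\<nu> > 0\<close> agg, of "1/3"] by auto
  have "F C < 1" using AGG_less_1[OF df \<open>\<nu> > 0\<close> agg] .
  define p0 where "p0 = max 3 (1 / (1 - F C))"
  have "C \<le> gen_inv F (1 - 1/q) \<and> 3/4 * \<nu> * ln q \<le> gen_inv F (1 - 1/q) powr \<nu>"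
    if "p > p0" "p \<le> q" for p q
  proof -
    have "q > 1" "p > 0" "p > 1 / (1 - F C)" using that by (auto simp: p0_def)
    have "1/q \<le> 1/p"
      using that \<open>q > 1\<close> by (intro divide_left_mono) (auto simp: p0_def)
    also have "1/p < 1 - F C"
      using \<open>p > 1 / (1 - F C)\<close> \<open>p > 0\<close> \<open>F C < 1\<close> by (simp add: field_simps)
    finally have "F C < 1 - 1/q" by simp
    from gen_inv_ge_of_exp_lower_tail[OF df \<open>\<nu> > 0\<close> _ \<open>C > 0\<close> lower \<open>q > 1\<close> this]
    show ?thesis by simp
  qed
  moreover have "p0 \<ge> 3" by (simp add: p0_def)
  ultimately show thesis
    using that \<open>C > 0\<close> upper by blast
qed

lemma AGG_quantile_tail:
  assumes df: "distribution_function F" and "\<nu> > 0" and agg: "AGG \<nu> F"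
  obtains p0 t0 :: real where "p0 > 0" "t0 > 0"
    and "\<And>p. p > p0 \<Longrightarrow> 0 < gen_inv F (1 - 1/p)"
    and "\<And>p. p > p0 \<Longrightarrow> 0 < gen_inv F (1 - 1/(p * ln p))"
    and "\<And>p t. p > p0 \<Longrightarrow> t > t0 \<Longrightarrow>
      p * (1 - F (t * gen_inv F (1 - 1/(p * ln p)))) \<le> exp (- (1/4) * t powr \<nu>)"
proof -
  obtain C p0 where "C > 0" "p0 \<ge> 3"
    and upper: "\<And>x. x \<ge> C \<Longrightarrow> 1 - F x \<le> exp (- (1/\<nu>) * x powr \<nu> * (1 - 1/3))"
    and quantile: "\<And>p q. p > p0 \<Longrightarrow> p \<le> q \<Longrightarrow>
      C \<le> gen_inv F (1 - 1/q) \<and> 3/4 * \<nu> * ln q \<le> gen_inv F (1 - 1/q) powr \<nu>"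
    using AGG_quantile_lower[OF df \<open>\<nu> > 0\<close> agg] by blast
  define t0 where "t0 = max 1 (4 powr (1/\<nu>))"
  have ln_p: "1 \<le> ln p" "p \<le> p * ln p" if "p > p0" for p
  proof -
    have "exp 1 \<le> p" using exp_le that \<open>p0 \<ge> 3\<close> by simp
    then show "1 \<le> ln p" using that \<open>p0 \<ge> 3\<close> by (simp add: ln_ge_iff)
    then show "p \<le> p * ln p" using that \<open>p0 \<ge> 3\<close> by simp
  qed
  show thesis
  proof (rule that)
    show "p0 > 0" "t0 > 0" using \<open>p0 \<ge> 3\<close> by (simp_all add: t0_def)
  next
    fix p assume "p > p0"
    then show "0 < gen_inv F (1 - 1/p)" and "0 < gen_inv F (1 - 1/(p * ln p))"
      using quantile[of p p] quantile[of p "p * ln p"] ln_p[of p] \<open>C > 0\<close> by auto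
  next
    fix p t assume "p > p0" "t > t0"
    define u where "u = gen_inv F (1 - 1/(p * ln p))"
    have "C \<le> u" and u_powr_ln: "3/4 * \<nu> * ln (p * ln p) \<le> u powr \<nu>"
      using quantile[of p "p * ln p"] ln_p[OF \<open>p > p0\<close>] \<open>p > p0\<close> unfolding u_def by auto
    have "ln p \<le> ln (p * ln p)"
      using ln_p[OF \<open>p > p0\<close>] \<open>p > p0\<close> \<open>p0 \<ge> 3\<close> by simp
    then have "3/4 * \<nu> * ln p \<le> 3/4 * \<nu> * ln (p * ln p)"
      using \<open>\<nu> > 0\<close> by (intro mult_left_mono) auto
    with u_powr_ln have u_powr: "3/4 * \<nu> * ln p \<le> u powr \<nu>"
      by linarith
    have "1 \<le> t" and "4 powr (1/\<nu>) \<le> t" using \<open>t > t0\<close> by (auto simp: t0_def)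
    then have "4 \<le> t powr \<nu>"
      using powr_mono2[of \<nu> "4 powr (1/\<nu>)" t] \<open>\<nu> > 0\<close> by (simp add: powr_powr)
    from tail_at_scaled_quantile_le[OF \<open>\<nu> > 0\<close> upper \<open>C > 0\<close> \<open>C \<le> u\<close> u_powr _ ln_p(1)[OF \<open>p > p0\<close>]
        \<open>1 \<le> t\<close> \<open>4 \<le> t powr \<nu>\<close>] \<open>p > p0\<close>
    show "p * (1 - F (t * u)) \<le> exp (- (1/4) * t powr \<nu>)"
      using \<open>p0 \<ge> 3\<close> by simp
  qed
qed

lemma (in prob_space) prob_Max_gt_le:
  fixes X :: "'i \<Rightarrow> 'a \<Rightarrow> real" and F :: "real \<Rightarrow> real"
  assumes "finite J" "J \<noteq> {}"
    and measurable: "\<And>j. j \<in> J \<Longrightarrow> X j \<in> borel_measurable M"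
    and marginal: "\<And>j. j \<in> J \<Longrightarrow> prob {\<omega> \<in> space M. X j \<omega> \<le> s} = F s"
  shows "prob {\<omega> \<in> space M. s < Max ((\<lambda>j. X j \<omega>) ` J)} \<le> card J * (1 - F s)"
proof -
  have event_gt: "{\<omega> \<in> space M. s < X j \<omega>} \<in> events" if "j \<in> J" for j
    using measurable[OF that] by measurable
  have event_le: "{\<omega> \<in> space M. X j \<omega> \<le> s} \<in> events" if "j \<in> J" for j
    using measurable[OF that] by measurable
  have "{\<omega> \<in> space M. s < Max ((\<lambda>j. X j \<omega>) ` J)} = (\<Union>j\<in>J. {\<omega> \<in> space M. s < X j \<omega>})"
    using assms(1,2) by (auto simp: Max_gr_iff)
  then have "prob {\<omega> \<in> space M. s < Max ((\<lambda>j. X j \<omega>) ` J)}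
      \<le> (\<Sum>j\<in>J. prob {\<omega> \<in> space M. s < X j \<omega>})"
    using event_gt assms(1) by (auto intro: measure_UNION_le)
  also have "\<dots> = (\<Sum>j\<in>J. 1 - F s)"
  proof (rule sum.cong)
    fix j assume "j \<in> J"
    have "{\<omega> \<in> space M. s < X j \<omega>} = space M - {\<omega> \<in> space M. X j \<omega> \<le> s}" by auto
    then show "prob {\<omega> \<in> space M. s < X j \<omega>} = 1 - F s"
      using prob_compl[OF event_le[OF \<open>j \<in> J\<close>]] marginal[OF \<open>j \<in> J\<close>] by simp
  qed simp
  finally show ?thesis by simp
qed

lemma summable_exp_powr_weights:
  fixes C \<nu> :: real
  assumes "C > 0" "\<nu> > 0"
  shows "summable (\<lambda>n::nat. (real n + 1) * exp (- C * (real n - 1) powr \<nu>))"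
proof (rule summable_comparison_test_bigo)
  show "summable (\<lambda>n. norm (real n powr -2))"
    by (simp add: summable_real_powr_iff)
  show "(\<lambda>n::nat. (real n + 1) * exp (- C * (real n - 1) powr \<nu>)) \<in> O(\<lambda>n. real n powr -2)"
    using assms by real_asymp
qed

lemma ennreal_le_suminf_level_indicators:
  fixes x :: real
  assumes "real K < x"
  shows "ennreal x \<le> (\<Sum>i. ennreal (real (i + K) + 1) * indicator {real (i + K)..} x)"
proof -
  define i where "i = nat \<lfloor>x\<rfloor> - K"
  have "real (i + K) \<le> x" "x \<le> real (i + K) + 1"
    using assms unfolding i_def by linarith+
  then have "ennreal x \<le> ennreal (real (i + K) + 1) * indicator {real (i + K)..} x"
    using ennreal_leI[of x "real (i + K) + 1"] by simp
  also have "\<dots> \<le> (\<Sum>i. ennreal (real (i + K) + 1) * indicator {real (i + K)..} x)"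
    using sum_le_suminf[OF summableI, of "{i}"] by simp
  finally show ?thesis .
qed

lemma (in prob_space) nn_integral_tail_le_suminf:
  fixes X :: "'a \<Rightarrow> real" and g :: "real \<Rightarrow> real"
  assumes X: "X \<in> borel_measurable M"
    and tail: "\<And>t. t > t0 \<Longrightarrow> prob {\<omega> \<in> space M. X \<omega> > t} \<le> g t"
    and summable: "summable (\<lambda>n. (real n + 1) * g (real n - 1))"
    and K: "real K > t0 + 1"
  shows "(\<integral>\<^sup>+\<omega>. ennreal (indicator {\<omega> \<in> space M. real K < X \<omega>} \<omega> * X \<omega>) \<partial>M)
    \<le> ennreal (\<Sum>i. (real (i + K) + 1) * g (real (i + K) - 1))"
proof -
  define w where "w n = (real n + 1) * g (real n - 1)" for n
  define A where "A n = {\<omega> \<in> space M. real n \<le> X \<omega>}" for n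
  have A_events: "A n \<in> events" for n
    unfolding A_def using X by measurable
  have w_nonneg: "0 \<le> w (i + K)" for i
    using order_trans[OF measure_nonneg tail[of "real (i + K) - 1"]] K unfolding w_def by simp
  have indicator_le: "ennreal (indicator {\<omega> \<in> space M. real K < X \<omega>} \<omega> * X \<omega>)
      \<le> (\<Sum>i. ennreal (real (i + K) + 1) * indicator (A (i + K)) \<omega>)" for \<omega>
  proof (cases "\<omega> \<in> space M \<and> real K < X \<omega>")
    case True
    then have "indicator (A n) \<omega> = (indicator {real n..} (X \<omega>) :: ennreal)" for n
      by (simp add: A_def indicator_def)
    with True ennreal_le_suminf_level_indicators[of K "X \<omega>"] show ?thesis
      by simp
  qed auto
  have "(\<integral>\<^sup>+\<omega>. ennreal (indicator {\<omega> \<in> space M. real K < X \<omega>} \<omega> * X \<omega>) \<partial>M)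
      \<le> (\<integral>\<^sup>+\<omega>. (\<Sum>i. ennreal (real (i + K) + 1) * indicator (A (i + K)) \<omega>) \<partial>M)"
    by (intro nn_integral_mono indicator_le)
  also have "\<dots> = (\<Sum>i. ennreal (real (i + K) + 1) * emeasure M (A (i + K)))"
    using A_events by (simp add: nn_integral_suminf nn_integral_cmult_indicator)
  also have "\<dots> \<le> (\<Sum>i. ennreal (w (i + K)))"
  proof (intro suminf_le summableI)
    fix i
    define n where "n = i + K"
    have "A n \<subseteq> {\<omega> \<in> space M. X \<omega> > real n - 1}"
      by (auto simp: A_def)
    moreover have "{\<omega> \<in> space M. X \<omega> > real n - 1} \<in> events"
      using X by measurable
    ultimately have "prob (A n) \<le> prob {\<omega> \<in> space M. X \<omega> > real n - 1}"
      by (rule finite_measure_mono)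
    also have "\<dots> \<le> g (real n - 1)"
      using K by (intro tail) (simp add: n_def)
    finally have "ennreal ((real n + 1) * prob (A n)) \<le> ennreal (w n)"
      unfolding w_def by (intro ennreal_leI mult_left_mono) auto
    then show "ennreal (real (i + K) + 1) * emeasure M (A (i + K)) \<le> ennreal (w (i + K))"
      by (simp add: n_def emeasure_eq_measure ennreal_mult)
  qed
  also have "\<dots> = ennreal (\<Sum>i. w (i + K))"
    using w_nonneg summable_iff_shift[of w K] summable unfolding w_def
    by (intro suminf_ennreal ennreal_suminf_neq_top) auto
  finally show ?thesis by (simp add: w_def)
qed

lemma (in prob_space) integrable_if_nn_integral_tail_finite:
  fixes X :: "'a \<Rightarrow> real"
  assumes X: "X \<in> borel_measurable M" and nonneg: "\<And>\<omega>. 0 \<le> X \<omega>" and "0 \<le> K"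
    and finite: "(\<integral>\<^sup>+\<omega>. ennreal (indicator {\<omega> \<in> space M. K < X \<omega>} \<omega> * X \<omega>) \<partial>M) < \<infinity>"
  shows "integrable M X"
proof (rule integrableI_bounded)
  have "ennreal (norm (X \<omega>)) \<le> ennreal K + ennreal (indicator {\<omega> \<in> space M. K < X \<omega>} \<omega> * X \<omega>)"
    if "\<omega> \<in> space M" for \<omega>
    using that nonneg[of \<omega>] \<open>0 \<le> K\<close>
    by (cases "K < X \<omega>") (auto simp: add_increasing ennreal_leI)
  then have "(\<integral>\<^sup>+\<omega>. ennreal (norm (X \<omega>)) \<partial>M)
      \<le> (\<integral>\<^sup>+\<omega>. ennreal K + ennreal (indicator {\<omega> \<in> space M. K < X \<omega>} \<omega> * X \<omega>) \<partial>M)"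
    by (rule nn_integral_mono)
  also have "\<dots> = ennreal K + (\<integral>\<^sup>+\<omega>. ennreal (indicator {\<omega> \<in> space M. K < X \<omega>} \<omega> * X \<omega>) \<partial>M)"
    using X by (subst nn_integral_add) (auto simp: emeasure_space_1)
  also have "\<dots> < \<infinity>"
    using finite by simp
  finally show "(\<integral>\<^sup>+\<omega>. ennreal (norm (X \<omega>)) \<partial>M) < \<infinity>" .
qed (rule X)

lemma unif_integrable_if_summable_tail:
  fixes M :: "'i \<Rightarrow> 'a measure" and X :: "'i \<Rightarrow> 'a \<Rightarrow> real" and g :: "real \<Rightarrow> real"
  assumes prob_space: "\<And>i. i \<in> I \<Longrightarrow> prob_space (M i)"
    and X: "\<And>i. i \<in> I \<Longrightarrow> X i \<in> borel_measurable (M i)"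
    and nonneg: "\<And>i \<omega>. 0 \<le> X i \<omega>"
    and tail: "\<And>i t. i \<in> I \<Longrightarrow> t > t0 \<Longrightarrow> measure (M i) {\<omega> \<in> space (M i). X i \<omega> > t} \<le> g t"
    and summable: "summable (\<lambda>n. (real n + 1) * g (real n - 1))"
  shows "unif_integrable M X I"
proof -
  define w where "w n = (real n + 1) * g (real n - 1)" for n
  have tail_integral: "(\<integral>\<^sup>+\<omega>. ennreal (indicator {\<omega> \<in> space (M i). real K < X i \<omega>} \<omega> * X i \<omega>) \<partial>M i)
      \<le> ennreal (\<Sum>n. w (n + K))" if "i \<in> I" "real K > t0 + 1" for i K
    using prob_space.nn_integral_tail_le_suminf[OF prob_space[OF that(1)] X[OF that(1)] tail[OF that(1)]
        summable that(2)]
    unfolding w_def .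
  obtain K0 :: nat where K0: "real K0 > t0 + 1"
    using reals_Archimedean2 by blast
  have "integrable (M i) (X i)" if "i \<in> I" for i
    using tail_integral[OF that K0]
    by (intro prob_space.integrable_if_nn_integral_tail_finite[where K = "real K0",
          OF prob_space[OF that] X[OF that] nonneg])
       (auto simp: le_less_trans)
  moreover have "\<exists>K. \<forall>i\<in>I. (\<integral>\<omega>. indicator {\<omega> \<in> space (M i). K < \<bar>X i \<omega>\<bar>} \<omega> * \<bar>X i \<omega>\<bar> \<partial>M i) \<le> e"
    if "e > 0" for e
  proof -
    obtain N where N: "\<And>n. n \<ge> N \<Longrightarrow> norm (\<Sum>k. w (k + n)) < e"
      using suminf_exist_split[OF \<open>e > 0\<close> summable[folded w_def]] by blast
    define K where "K = max N K0"
    have "(\<integral>\<omega>. indicator {\<omega> \<in> space (M i). real K < \<bar>X i \<omega>\<bar>} \<omega> * \<bar>X i \<omega>\<bar> \<partial>M i) \<le> e"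
      if "i \<in> I" for i
    proof -
      have "ennreal (\<Sum>n. w (n + K)) \<le> ennreal e"
        using N[of K] by (intro ennreal_leI) (simp add: K_def)
      moreover have "real K > t0 + 1"
        using K0 by (simp add: K_def)
      ultimately have "(\<integral>\<^sup>+\<omega>. ennreal (indicator {\<omega> \<in> space (M i). real K < X i \<omega>} \<omega> * X i \<omega>) \<partial>M i)
          \<le> ennreal e"
        using tail_integral[OF that] order_trans by blast
      then show ?thesis
        using \<open>e > 0\<close> nonneg by (simp add: abs_of_nonneg integral_real_bounded)
    qed
    then show ?thesis by blast
  qed
  ultimately show ?thesis
    unfolding unif_integrable_def by blast
qed

lemma unif_integrable_pos_part_if_summable_tail:
  fixes M :: "'i \<Rightarrow> 'a measure" and X :: "'i \<Rightarrow> 'a \<Rightarrow> real" and g :: "real \<Rightarrow> real"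
  assumes prob_space: "\<And>i. i \<in> I \<Longrightarrow> prob_space (M i)"
    and X: "\<And>i. i \<in> I \<Longrightarrow> X i \<in> borel_measurable (M i)"
    and "0 \<le> t0"
    and tail: "\<And>i t. i \<in> I \<Longrightarrow> t > t0 \<Longrightarrow> measure (M i) {\<omega> \<in> space (M i). X i \<omega> > t} \<le> g t"
    and summable: "summable (\<lambda>n. (real n + 1) * g (real n - 1))"
  shows "unif_integrable M (\<lambda>i \<omega>. max (X i \<omega>) 0) I"
proof (rule unif_integrable_if_summable_tail[OF prob_space _ _ _ summable])
  show "(\<lambda>\<omega>. max (X i \<omega>) 0) \<in> borel_measurable (M i)" if "i \<in> I" for i
    using X[OF that] by measurable
  show "measure (M i) {\<omega> \<in> space (M i). max (X i \<omega>) 0 > t} \<le> g t" if "i \<in> I" "t > t0" for i t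
  proof -
    have "{\<omega> \<in> space (M i). max (X i \<omega>) 0 > t} = {\<omega> \<in> space (M i). X i \<omega> > t}"
      using that \<open>0 \<le> t0\<close> by auto
    then show ?thesis using tail[OF that] by simp
  qed
qed auto

theorem mainTheorem1:
  fixes \<nu> :: real and F :: "real \<Rightarrow> real"
    and M :: "nat \<Rightarrow> 'a measure" and \<epsilon> :: "nat \<Rightarrow> nat \<Rightarrow> 'a \<Rightarrow> real"
  assumes "\<nu> > 0"
    and "distribution_function F"
    and "AGG \<nu> F"
    and "\<And>p. prob_space (M p)"
    and "\<And>p j. j \<in> {1..p} \<Longrightarrow> \<epsilon> p j \<in> borel_measurable (M p)"
    and "\<And>p j x. j \<in> {1..p} \<Longrightarrow>
            measure (M p) {\<omega> \<in> space (M p). \<epsilon> p j \<omega> \<le> x} = F x"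
  defines "\<xi> \<equiv> (\<lambda>p::nat. \<lambda>\<omega>.
      Max ((\<lambda>j. \<epsilon> p j \<omega>) ` {1..p}) /
      ((1 + (gen_inv F (1 - 1 / (real p * ln (real p))) / gen_inv F (1 - 1 / real p) - 1))
        * gen_inv F (1 - 1 / real p)))"
  shows "\<exists>p0>0. \<exists>t0>0. \<exists>C>0.
           (\<forall>p::nat. \<forall>t::real. real p > p0 \<longrightarrow> t > t0 \<longrightarrow>
              measure (M p) {\<omega> \<in> space (M p). \<xi> p \<omega> > t} \<le> exp (- C * t powr \<nu>))
         \<and> unif_integrable M (\<lambda>p \<omega>. max (\<xi> p \<omega>) 0) {p. real p > p0}"
proof -
  obtain p0 t0 where "p0 > 0" "t0 > 0"
    and u_p_pos: "\<And>p. p > p0 \<Longrightarrow> 0 < gen_inv F (1 - 1/p)"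
    and u_q_pos: "\<And>p. p > p0 \<Longrightarrow> 0 < gen_inv F (1 - 1/(p * ln p))"
    and quantile_tail: "\<And>p t. p > p0 \<Longrightarrow> t > t0 \<Longrightarrow>
      p * (1 - F (t * gen_inv F (1 - 1/(p * ln p)))) \<le> exp (- (1/4) * t powr \<nu>)"
    using AGG_quantile_tail[OF assms(2,1,3)] by blast
  have \<xi>_tail: "measure (M p) {\<omega> \<in> space (M p). \<xi> p \<omega> > t} \<le> exp (- (1/4) * t powr \<nu>)"
    if "real p > p0" "t > t0" for p t
  proof -
    define u where "u = gen_inv F (1 - 1 / (real p * ln (real p)))"
    have "u > 0"
      using u_q_pos[OF that(1)] by (simp add: u_def)
    then have "{\<omega> \<in> space (M p). \<xi> p \<omega> > t}
        = {\<omega> \<in> space (M p). t * u < Max ((\<lambda>j. \<epsilon> p j \<omega>) ` {1..p})}"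
      using u_p_pos[OF that(1)] unfolding \<xi>_def u_def by (auto simp: pos_less_divide_eq)
    moreover have "measure (M p) {\<omega> \<in> space (M p). t * u < Max ((\<lambda>j. \<epsilon> p j \<omega>) ` {1..p})}
        \<le> card {1..p} * (1 - F (t * u))"
      by (rule prob_space.prob_Max_gt_le[OF assms(4)]) (use that \<open>p0 > 0\<close> assms(5,6) in auto)
    ultimately show ?thesis
      using quantile_tail[OF that] by (simp add: u_def)
  qed
  have "unif_integrable M (\<lambda>p \<omega>. max (\<xi> p \<omega>) 0) {p. real p > p0}"
  proof (rule unif_integrable_pos_part_if_summable_tail[OF _ _ less_imp_le[OF \<open>t0 > 0\<close>]])
    show "\<xi> p \<in> borel_measurable (M p)" for p
      unfolding \<xi>_def using assms(5)[of _ p] by measurable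
    show "summable (\<lambda>n. (real n + 1) * exp (- (1/4) * (real n - 1) powr \<nu>))"
      using summable_exp_powr_weights[of "1/4" \<nu>] assms(1) by simp
  qed (use assms(4) \<xi>_tail in auto)
  with \<xi>_tail \<open>p0 > 0\<close> \<open>t0 > 0\<close> show ?thesis
    by (intro exI[of _ p0] exI[of _ t0] exI[of _ "1/4"] conjI allI impI) auto
qed

end
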